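(* Let $\mathcal{A}$ be a CA of radius $r$ over alphabet $Q$ and $\mu$ a complete Bernoulli measure on $Q^{\mathbb{Z}}$. Then for any word $w\in Q^*$ and any persistent word $u\in L_\mu(\mathcal{A})$ there exist positive integers $k_1,k_2$ and a strictly increasing sequence of positive integers $(n_j)_{j\ge0}$ such that for all $j\ge0$, $$\mathcal{A}^{-n_j}(u)\cap\Big(Q^{rn_j-k_1-|w|}\cdot\{w\}\cdot Q^{k_1+k_2+|u|}\cdot\{w\}\cdot Q^{rn_j-k_2-|w|}\Big)\neq\emptyset .$$
   Context: A one-dimensional cellular automaton (CA) $\mathcal{A}$ is given by a finite alphabet $Q$, a radius $r\ge 0$ and a local rule $\delta:Q^{2r+1}\to Q$; it acts on configurations $c\in Q^{\mathbb{Z}}$ by $\mathcal{A}(c)_i=\delta(c_{i-r},\dots,c_{i+r})$. The local rule also maps any word $v$ of length $m\ge 2r+1$ to the word of length $m-2r$ obtained by applying $\delta$ to each window of length $2r+1$; for a word $u$ and $n\ge0$, $\mathcal{A}^{-n}(u)$ denotes the set of words $v$ of length $|u|+2rn$ whose image under $n$ such applications is $u$. For $u\in Q^*$, $i\in\mathbb{Z}$, $[u]_i=\{c\in Q^{\mathbb{Z}}: c_i\cdots c_{i+|u|-1}=u\}$. A Bernoulli measure $\mu$ on $Q^{\mathbb{Z}}$ is given by a probability vector $(p_a)_{a\in Q}$ with $\mu([u]_i)=\prod_{a\in Q}p_a^{|u|_a}$, where $|u|_a$ is the number of occurrences of $a$ in $u$; it is complete if $p_a>0$ for all $a$. $\mathcal{A}^n\mu(U)=\mu(\mathcal{A}^{-n}(U))$.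 A word $u$ is persistent for $(\mathcal{A},\mu)$ if $\mathcal{A}^n\mu([u]_0)$ does not tend to $0$ as $n\to\infty$; $L_\mu(\mathcal{A})$ is the set of persistent words. For sets of words $X,Y$, $X\cdot Y$ denotes concatenation and $Q^m$ the set of words of length $m$. *)

theory Defs
  imports Complex_Main
begin

text \<open>Words over the alphabet are lists. A local rule of radius r is a function
  delta on words, applied only to words of length 2r+1.\<close>

definition apply_rule :: "('q list \<Rightarrow> 'q) \<Rightarrow> nat \<Rightarrow> 'q list \<Rightarrow> 'q list" where
  "apply_rule \<delta> r v = map (\<lambda>i. \<delta> (take (2*r+1) (drop i v))) [0..<length v - 2*r]"

definition preimage_words :: "('q list \<Rightarrow> 'q) \<Rightarrow> nat \<Rightarrow> nat \<Rightarrow> 'q list \<Rightarrow> 'q list set" where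
  "preimage_words \<delta> r n u =
     {v. length v = length u + 2*r*n \<and> (apply_rule \<delta> r ^^ n) v = u}"

text \<open>Bernoulli measure of a cylinder [v]_i.\<close>
definition bernoulli_word :: "('q \<Rightarrow> real) \<Rightarrow> 'q list \<Rightarrow> real" where
  "bernoulli_word p v = prod_list (map p v)"

definition complete_bernoulli :: "('q::finite \<Rightarrow> real) \<Rightarrow> bool" where
  "complete_bernoulli p \<longleftrightarrow> (\<forall>a. p a > 0) \<and> (\<Sum>a\<in>UNIV. p a) = 1"

text \<open>A^n mu([u]_0) = mu(A^{-n}([u]_0)); the preimage of the cylinder [u]_0 is the disjoint
  union of the cylinders [v]_{-rn}, v in A^{-n}(u).\<close>
definition pushforward_cyl :: "('q list \<Rightarrow> 'q) \<Rightarrow> nat \<Rightarrow> ('q \<Rightarrow> real) \<Rightarrow> nat \<Rightarrow> 'q list \<Rightarrow> real" where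
  "pushforward_cyl \<delta> r p n u = (\<Sum>v\<in>preimage_words \<delta> r n u. bernoulli_word p v)"

definition persistent :: "('q list \<Rightarrow> 'q) \<Rightarrow> nat \<Rightarrow> ('q \<Rightarrow> real) \<Rightarrow> 'q list \<Rightarrow> bool" where
  "persistent \<delta> r p u \<longleftrightarrow> \<not> ((\<lambda>n. pushforward_cyl \<delta> r p n u) \<longlonglongrightarrow> 0)"

text \<open>Q^{a} . {w} . Q^{b} . {w} . Q^{c} with integer exponents (empty if an exponent is negative).\<close>
definition pattern_set :: "int \<Rightarrow> 'q list \<Rightarrow> int \<Rightarrow> int \<Rightarrow> 'q list set" where
  "pattern_set a w b c = {x @ w @ y @ w @ z | x y z.
      int (length x) = a \<and> int (length y) = b \<and> int (length z) = c}"

end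

theory Submission
  imports Defs "HOL-Library.Infinite_Set"
begin

text \<open>Since \<open>u\<close> is persistent, \<open>\<A>\<^sup>n\<mu>([u]\<^sub>0) \<ge> e > 0\<close> for infinitely many \<open>n\<close>. Under a
  Bernoulli measure the events ``\<open>w\<close> occurs at position \<open>i\<close>'' for non-overlapping positions are
  independent, each of probability \<open>\<mu>[w] > 0\<close>; so the words of length \<open>|u| + 2rn\<close> that avoid \<open>w\<close>
  in each of \<open>M\<close> disjoint slots just left (resp. right) of the central window have measure
  \<open>(1 - \<mu>[w])\<^sup>M < e/2\<close> once \<open>M\<close> is large. Hence for each such \<open>n\<close> some preimage of \<open>u\<close> contains
  \<open>w\<close> on both sides within distance \<open>M(|w| + 1)\<close> of the window, and since there are only finitely
  many such pairs of distances, one pair \<open>(k\<^sub>1, k\<^sub>2)\<close> recurs for infinitely many \<open>n\<close>.\<close>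

definition word_measure :: "('q \<Rightarrow> real) \<Rightarrow> nat \<Rightarrow> ('q list \<Rightarrow> bool) \<Rightarrow> real" where
  "word_measure p n P = (\<Sum>v | length v = n \<and> P v. bernoulli_word p v)"

definition occurs_at :: "'q list \<Rightarrow> nat \<Rightarrow> 'q list \<Rightarrow> bool" where
  "occurs_at w i v \<longleftrightarrow> take (length w) (drop i v) = w"

lemma finite_words_length: "finite {v::'q::finite list. length v = n \<and> P v}"
  by (rule finite_subset[OF _ finite_lists_length_eq[of "UNIV::'q set" n]]) auto

lemma bernoulli_word_append: "bernoulli_word p (a @ b) = bernoulli_word p a * bernoulli_word p b"
  by (simp add: bernoulli_word_def)

lemma bernoulli_word_pos: "complete_bernoulli p \<Longrightarrow> 0 < bernoulli_word p v"
  unfolding bernoulli_word_def complete_bernoulli_def by (induction v) auto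

lemma pushforward_cyl_eq_word_measure:
  "pushforward_cyl \<delta> r p n u = word_measure p (length u + 2*r*n) (\<lambda>v. (apply_rule \<delta> r ^^ n) v = u)"
  by (simp add: pushforward_cyl_def word_measure_def preimage_words_def)

lemma word_measure_cong:
  "(\<And>v. length v = n \<Longrightarrow> P v \<longleftrightarrow> Q v) \<Longrightarrow> word_measure p n P = word_measure p n Q"
  unfolding word_measure_def by (rule sum.cong) auto

lemma word_measure_nonneg: "complete_bernoulli p \<Longrightarrow> 0 \<le> word_measure p n P"
  unfolding word_measure_def by (simp add: bernoulli_word_pos less_imp_le sum_nonneg)

lemma word_measure_append:
  fixes p :: "'q::finite \<Rightarrow> real"
  shows "word_measure p (m + n) (\<lambda>v. P (take m v) \<and> Q (drop m v))
    = word_measure p m P * word_measure p n Q"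
proof -
  let ?A = "{a. length a = m \<and> P a}" and ?B = "{b. length b = n \<and> Q b}"
  have split: "{v. length v = m + n \<and> P (take m v) \<and> Q (drop m v)} = (\<lambda>(a, b). a @ b) ` (?A \<times> ?B)"
  proof (rule set_eqI, rule iffI)
    fix v :: "'q list"
    assume "v \<in> {v. length v = m + n \<and> P (take m v) \<and> Q (drop m v)}"
    then show "v \<in> (\<lambda>(a, b). a @ b) ` (?A \<times> ?B)"
      by (intro rev_image_eqI[of "(take m v, drop m v)"]) auto
  qed auto
  have inj: "inj_on (\<lambda>(a, b). a @ b) (?A \<times> ?B)"
    by (auto simp: inj_on_def)
  have "word_measure p (m + n) (\<lambda>v. P (take m v) \<and> Q (drop m v))
      = (\<Sum>(a, b)\<in>?A \<times> ?B. bernoulli_word p (a @ b))"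
    unfolding word_measure_def split sum.reindex[OF inj] by (simp add: case_prod_unfold)
  also have "\<dots> = (\<Sum>a\<in>?A. \<Sum>b\<in>?B. bernoulli_word p a * bernoulli_word p b)"
    by (simp add: sum.cartesian_product bernoulli_word_append)
  also have "\<dots> = word_measure p m P * word_measure p n Q"
    by (simp add: word_measure_def sum_product)
  finally show ?thesis .
qed

lemma word_measure_True:
  fixes p :: "'q::finite \<Rightarrow> real"
  assumes "complete_bernoulli p"
  shows "word_measure p n (\<lambda>_. True) = 1"
proof (induction n)
  case 0
  show ?case by (simp add: word_measure_def bernoulli_word_def)
next
  case (Suc n)
  have "{v::'q list. length v = 1} = range (\<lambda>a. [a])"
    by (auto simp: length_Suc_conv)
  moreover have "inj (\<lambda>a::'q. [a])"
    by (simp add: inj_def)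
  ultimately have "word_measure p 1 (\<lambda>_. True) = (\<Sum>a\<in>UNIV. p a)"
    by (simp add: word_measure_def sum.reindex bernoulli_word_def)
  also have "\<dots> = 1"
    using assms by (simp add: complete_bernoulli_def)
  finally have "word_measure p 1 (\<lambda>_. True) = 1" .
  then show ?case
    using Suc.IH word_measure_append[of p 1 n "\<lambda>_. True" "\<lambda>_. True"] by simp
qed

lemma word_measure_Not:
  fixes p :: "'q::finite \<Rightarrow> real"
  assumes "complete_bernoulli p"
  shows "word_measure p n (\<lambda>v. \<not> P v) = 1 - word_measure p n P"
proof -
  let ?A = "{v. length v = n \<and> P v}" and ?B = "{v. length v = n \<and> \<not> P v}"
  have "word_measure p n P + word_measure p n (\<lambda>v. \<not> P v) = sum (bernoulli_word p) (?A \<union> ?B)"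
    unfolding word_measure_def by (rule sum.union_disjoint[symmetric]) (auto intro: finite_words_length)
  also have "?A \<union> ?B = {v. length v = n \<and> True}"
    by auto
  finally show ?thesis
    using word_measure_True[OF assms, of n] unfolding word_measure_def by simp
qed

lemma word_measure_disj_le:
  fixes p :: "'q::finite \<Rightarrow> real"
  assumes "complete_bernoulli p"
  shows "word_measure p n (\<lambda>v. P v \<or> Q v) \<le> word_measure p n P + word_measure p n Q"
proof -
  let ?A = "{v. length v = n \<and> P v}" and ?B = "{v. length v = n \<and> Q v}"
  have "word_measure p n P + word_measure p n Q
      = sum (bernoulli_word p) (?A \<union> ?B) + sum (bernoulli_word p) (?A \<inter> ?B)"
    unfolding word_measure_def by (rule sum.union_inter[symmetric]) (auto intro: finite_words_length)
  also have "?A \<union> ?B = {v. length v = n \<and> (P v \<or> Q v)}"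
    by auto
  finally show ?thesis
    using assms unfolding word_measure_def
    by (simp add: bernoulli_word_pos less_imp_le sum_nonneg)
qed

lemma exists_word_avoiding_light_events:
  fixes p :: "'q::finite \<Rightarrow> real"
  assumes "complete_bernoulli p"
    and "word_measure p n (\<lambda>v. \<not> Q v) + word_measure p n (\<lambda>v. \<not> R v) < word_measure p n P"
  shows "\<exists>v. length v = n \<and> P v \<and> Q v \<and> R v"
proof (rule ccontr)
  assume "\<nexists>v. length v = n \<and> P v \<and> Q v \<and> R v"
  then have "{v. length v = n \<and> P v} \<subseteq> {v. length v = n \<and> (\<not> Q v \<or> \<not> R v)}"
    by blast
  then have "word_measure p n P \<le> word_measure p n (\<lambda>v. \<not> Q v \<or> \<not> R v)"
    unfolding word_measure_def using assms(1)
    by (intro sum_mono2[OF finite_words_length]) (auto simp: bernoulli_word_pos less_imp_le)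
  also have "\<dots> \<le> word_measure p n (\<lambda>v. \<not> Q v) + word_measure p n (\<lambda>v. \<not> R v)"
    by (rule word_measure_disj_le[OF assms(1)])
  finally show False
    using assms(2) by simp
qed

lemma word_measure_take:
  fixes p :: "'q::finite \<Rightarrow> real"
  assumes "complete_bernoulli p"
  shows "word_measure p (m + n) (\<lambda>v. P (take m v)) = word_measure p m P"
  using word_measure_append[of p m n P "\<lambda>_. True"] word_measure_True[OF assms] by simp

lemma word_measure_drop:
  fixes p :: "'q::finite \<Rightarrow> real"
  assumes "complete_bernoulli p"
  shows "word_measure p (m + n) (\<lambda>v. Q (drop m v)) = word_measure p n Q"
  using word_measure_append[of p m n "\<lambda>_. True" Q] word_measure_True[OF assms] by simp

lemma word_measure_occurs_at:
  fixes p :: "'q::finite \<Rightarrow> real"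
  assumes "complete_bernoulli p" and "i + length w \<le> n"
  shows "word_measure p n (occurs_at w i) = bernoulli_word p w"
proof -
  obtain k where n: "n = i + (length w + k)"
    using assms(2) by (metis add.assoc le_iff_add)
  have "word_measure p n (occurs_at w i) = word_measure p (length w + k) (\<lambda>b. take (length w) b = w)"
    unfolding n occurs_at_def by (rule word_measure_drop[OF assms(1)])
  also have "\<dots> = word_measure p (length w) (\<lambda>s. s = w)"
    by (rule word_measure_take[OF assms(1)])
  also have "\<dots> = bernoulli_word p w"
  proof -
    have "{s. length s = length w \<and> s = w} = {w}"
      by auto
    then show ?thesis
      by (simp add: word_measure_def)
  qed
  finally show ?thesis .
qed

lemma occurs_at_drop: "occurs_at w i (drop j v) \<longleftrightarrow> occurs_at w (i + j) v"
  by (simp add: occurs_at_def)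

lemma occurs_at_take: "i + length w \<le> j \<Longrightarrow> occurs_at w i (take j v) \<longleftrightarrow> occurs_at w i v"
  by (simp add: occurs_at_def drop_take min_def)

lemma occurs_at_split:
  "occurs_at w i v \<Longrightarrow> i + length w \<le> length v \<Longrightarrow> v = take i v @ w @ drop (i + length w) v"
  unfolding occurs_at_def by (metis append_take_drop_id drop_drop add.commute)

lemma word_measure_no_occurrence_progression:
  fixes p :: "'q::finite \<Rightarrow> real"
  assumes cb: "complete_bernoulli p" and wd: "length w \<le> d"
  shows "c + M * d \<le> n \<Longrightarrow>
    word_measure p n (\<lambda>v. \<forall>m<M. \<not> occurs_at w (c + m * d) v) = (1 - bernoulli_word p w) ^ M"
proof (induction M arbitrary: c n)
  case 0
  then show ?case
    using word_measure_True[OF cb] by simp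
next
  case (Suc M)
  define k where "k = n - (c + d)"
  have n: "n = (c + d) + k" and k: "0 + M * d \<le> k"
    using Suc.prems unfolding k_def by simp_all
  have "word_measure p n (\<lambda>v. \<forall>m<Suc M. \<not> occurs_at w (c + m * d) v)
      = word_measure p ((c + d) + k) (\<lambda>v. \<not> occurs_at w c (take (c + d) v)
          \<and> (\<forall>m<M. \<not> occurs_at w (0 + m * d) (drop (c + d) v)))"
    unfolding n using wd
    by (intro word_measure_cong) (simp add: All_less_Suc2 occurs_at_take occurs_at_drop algebra_simps)
  also have "\<dots> = word_measure p (c + d) (\<lambda>a. \<not> occurs_at w c a)
      * word_measure p k (\<lambda>b. \<forall>m<M. \<not> occurs_at w (0 + m * d) b)"
    by (rule word_measure_append)
  also have "\<dots> = (1 - bernoulli_word p w) * (1 - bernoulli_word p w) ^ M"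
    using wd by (simp add: word_measure_Not[OF cb] word_measure_occurs_at[OF cb] Suc.IH[OF k, simplified])
  finally show ?case
    by simp
qed

lemma pattern_set_if_occurs_at:
  assumes "occurs_at w i v" "occurs_at w j v" "i + length w \<le> j" "j + length w \<le> length v"
  shows "v \<in> pattern_set (int i) w (int (j - i - length w)) (int (length v - j - length w))"
proof -
  define y where "y = drop (i + length w) v"
  have v: "v = take i v @ w @ y"
    using occurs_at_split[OF assms(1)] assms(3,4) unfolding y_def by simp
  have "occurs_at w (j - i - length w) y"
    using assms(2,3) unfolding y_def by (simp add: occurs_at_drop)
  then have y: "y = take (j - i - length w) y @ w @ drop (j - i - length w + length w) y"
    by (rule occurs_at_split) (use assms(3,4) in \<open>simp add: y_def\<close>)
  show ?thesis
    unfolding pattern_set_def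
    by (rule CollectI, rule exI[of _ "take i v"], rule exI[of _ "take (j - i - length w) y"],
        rule exI[of _ "drop (j - i - length w + length w) y"])
      (use v y assms(3,4) in \<open>auto simp: y_def\<close>)
qed

definition framed_preimage ::
    "('q list \<Rightarrow> 'q) \<Rightarrow> nat \<Rightarrow> 'q list \<Rightarrow> 'q list \<Rightarrow> nat \<Rightarrow> nat \<Rightarrow> nat \<Rightarrow> bool" where
  "framed_preimage \<delta> r u w k1 k2 n \<longleftrightarrow> preimage_words \<delta> r n u \<inter>
     pattern_set (int r * int n - int k1 - int (length w)) w
       (int k1 + int k2 + int (length u)) (int r * int n - int k2 - int (length w)) \<noteq> {}"

lemma framed_preimage_if_occurs_at:
  assumes "v \<in> preimage_words \<delta> r n u"
    and "occurs_at w (r * n - k1 - length w) v" "occurs_at w (r * n + length u + k2) v"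
    and "k1 + length w \<le> r * n" "k2 + length w \<le> r * n"
  shows "framed_preimage \<delta> r u w k1 k2 n"
proof -
  define R where "R = r * n"
  have len: "length v = length u + 2 * R"
    using assms(1) by (simp add: preimage_words_def R_def mult.assoc)
  have "v \<in> pattern_set (int (R - k1 - length w)) w
      (int (R + length u + k2 - (R - k1 - length w) - length w))
      (int (length v - (R + length u + k2) - length w))"
    using assms(2-5) len unfolding R_def[symmetric] by (intro pattern_set_if_occurs_at) auto
  moreover have "int (R - k1 - length w) = int R - int k1 - int (length w)"
    and "int (R + length u + k2 - (R - k1 - length w) - length w) = int k1 + int k2 + int (length u)"
    and "int (length v - (R + length u + k2) - length w) = int R - int k2 - int (length w)"
    using assms(4,5) len unfolding R_def[symmetric] by auto
  ultimately have "v \<in> pattern_set (int R - int k1 - int (length w)) w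
      (int k1 + int k2 + int (length u)) (int R - int k2 - int (length w))"
    by argo
  then show ?thesis
    using assms(1) unfolding framed_preimage_def R_def of_nat_mult by blast
qed

lemma exists_preimage_with_occurrences:
  fixes \<delta> :: "'q::finite list \<Rightarrow> 'q" and p :: "'q \<Rightarrow> real"
  assumes cb: "complete_bernoulli p" and wd: "length w \<le> d"
    and long: "(M + 1) * d \<le> r * n"
    and heavy: "2 * (1 - bernoulli_word p w) ^ M < pushforward_cyl \<delta> r p n u"
  shows "\<exists>v\<in>preimage_words \<delta> r n u.
    (\<exists>m<M. occurs_at w (r * n - M * d - length w + m * d) v)
    \<and> (\<exists>m<M. occurs_at w (r * n + length u + d + m * d) v)"
proof -
  define R where "R = r * n"
  define L where "L = length u + 2 * R"
  have "word_measure p L (\<lambda>v. \<not> (\<exists>m<M. occurs_at w (R - M * d - length w + m * d) v))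
      + word_measure p L (\<lambda>v. \<not> (\<exists>m<M. occurs_at w (R + length u + d + m * d) v))
      = 2 * (1 - bernoulli_word p w) ^ M"
    using word_measure_no_occurrence_progression[OF cb wd, of "R - M * d - length w" M L]
      word_measure_no_occurrence_progression[OF cb wd, of "R + length u + d" M L]
      long[folded R_def] wd
    by (simp add: L_def)
  also have "\<dots> < word_measure p L (\<lambda>v. (apply_rule \<delta> r ^^ n) v = u)"
    using heavy by (simp add: pushforward_cyl_eq_word_measure L_def R_def mult.assoc)
  finally have "\<exists>v. length v = L \<and> (apply_rule \<delta> r ^^ n) v = u
      \<and> (\<exists>m<M. occurs_at w (R - M * d - length w + m * d) v)
      \<and> (\<exists>m<M. occurs_at w (R + length u + d + m * d) v)"
    by (rule exists_word_avoiding_light_events[OF cb])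
  then show ?thesis
    unfolding preimage_words_def L_def R_def by (auto simp: mult.assoc)
qed

lemma framed_preimage_if_heavy:
  fixes \<delta> :: "'q::finite list \<Rightarrow> 'q" and p :: "'q \<Rightarrow> real"
  assumes cb: "complete_bernoulli p"
    and long: "(M + 1) * Suc (length w) \<le> r * n"
    and heavy: "2 * (1 - bernoulli_word p w) ^ M < pushforward_cyl \<delta> r p n u"
  shows "\<exists>k1\<in>{1..M * Suc (length w)}. \<exists>k2\<in>{1..M * Suc (length w)}. framed_preimage \<delta> r u w k1 k2 n"
proof -
  \<comment> \<open>Slots of width \<open>|w| + 1\<close> rather than \<open>|w|\<close> keep \<open>k1, k2\<close> positive also for empty \<open>w\<close>.\<close>
  define d where "d = Suc (length w)"
  have "0 < d" and "length w \<le> d" and long_d: "M * d + d \<le> r * n"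
    using long unfolding d_def by simp_all
  obtain v m1 m2 where v: "v \<in> preimage_words \<delta> r n u"
    and m1: "m1 < M" "occurs_at w (r * n - M * d - length w + m1 * d) v"
    and m2: "m2 < M" "occurs_at w (r * n + length u + d + m2 * d) v"
    using exists_preimage_with_occurrences[OF cb _ long heavy] unfolding d_def by auto
  define k1 where "k1 = (M - m1) * d"
  define k2 where "k2 = Suc m2 * d"
  have k1: "k1 \<in> {1..M * d}"
    using m1 \<open>0 < d\<close> unfolding k1_def by (auto simp: Suc_le_eq intro!: mult_le_mono1)
  have k2: "k2 \<in> {1..M * d}"
    using mult_le_mono1[of "Suc m2" M d] m2 \<open>0 < d\<close> unfolding k2_def by simp
  have "m1 * d + k1 = M * d"
    using m1 unfolding k1_def by (simp add: add_mult_distrib[symmetric])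
  then have "r * n - M * d - length w + m1 * d = r * n - k1 - length w"
    using long_d \<open>length w \<le> d\<close> by simp
  with m1(2) have occ1: "occurs_at w (r * n - k1 - length w) v"
    by simp
  have "r * n + length u + d + m2 * d = r * n + length u + k2"
    unfolding k2_def by simp
  with m2(2) have occ2: "occurs_at w (r * n + length u + k2) v"
    by simp
  have "k1 + length w \<le> r * n" "k2 + length w \<le> r * n"
    using k1 k2 long_d unfolding d_def by auto
  then have "framed_preimage \<delta> r u w k1 k2 n"
    by (rule framed_preimage_if_occurs_at[OF v occ1 occ2])
  with k1 k2 show ?thesis
    unfolding d_def by blast
qed

lemma not_tendsto_zero_frequently_ge:
  fixes f :: "nat \<Rightarrow> real"
  assumes "\<And>n. 0 \<le> f n" and "\<not> f \<longlonglongrightarrow> 0"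
  shows "\<exists>e>0. \<exists>\<^sub>F n in sequentially. e \<le> f n"
proof -
  obtain e where "e > 0" and "\<not> (\<forall>\<^sub>F n in sequentially. dist (f n) 0 < e)"
    using assms(2) unfolding tendsto_iff by blast
  then show ?thesis
    using assms(1) unfolding not_eventually by (auto elim!: frequently_elim1)
qed

lemma persistent_frequently_framed_preimage:
  fixes \<delta> :: "'q::finite list \<Rightarrow> 'q" and p :: "'q \<Rightarrow> real"
  assumes "r \<ge> 1" and cb: "complete_bernoulli p" and "persistent \<delta> r p u"
  shows "\<exists>B. \<exists>\<^sub>F n in sequentially. \<exists>k1\<in>{1..B}. \<exists>k2\<in>{1..B}. framed_preimage \<delta> r u w k1 k2 n"
proof -
  have "\<And>n. 0 \<le> pushforward_cyl \<delta> r p n u"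
    by (simp add: pushforward_cyl_eq_word_measure word_measure_nonneg[OF cb])
  then have "\<exists>e>0. \<exists>\<^sub>F n in sequentially. e \<le> pushforward_cyl \<delta> r p n u"
    using assms(3) unfolding persistent_def by (rule not_tendsto_zero_frequently_ge)
  then obtain e where e: "e > 0" and often: "\<exists>\<^sub>F n in sequentially. e \<le> pushforward_cyl \<delta> r p n u"
    by blast
  have "\<exists>M. (1 - bernoulli_word p w) ^ M < e / 2"
    by (rule real_arch_pow_inv) (use e bernoulli_word_pos[OF cb, of w] in auto)
  then obtain M where M: "(1 - bernoulli_word p w) ^ M < e / 2" ..
  have "\<forall>\<^sub>F n in sequentially. (M + 1) * Suc (length w) \<le> r * n"
    using eventually_ge_at_top[of "(M + 1) * Suc (length w)"]
  proof (rule eventually_mono)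
    fix n
    assume "(M + 1) * Suc (length w) \<le> n"
    then show "(M + 1) * Suc (length w) \<le> r * n"
      using mult_le_mono1[OF assms(1), of n] by (metis le_trans mult_1)
  qed
  with often have "\<exists>\<^sub>F n in sequentially.
      e \<le> pushforward_cyl \<delta> r p n u \<and> (M + 1) * Suc (length w) \<le> r * n"
    by (rule frequently_eventually_frequently)
  then have "\<exists>\<^sub>F n in sequentially. \<exists>k1\<in>{1..M * Suc (length w)}. \<exists>k2\<in>{1..M * Suc (length w)}.
      framed_preimage \<delta> r u w k1 k2 n"
  proof (rule frequently_elim1)
    fix n
    assume n: "e \<le> pushforward_cyl \<delta> r p n u \<and> (M + 1) * Suc (length w) \<le> r * n"
    with M have "2 * (1 - bernoulli_word p w) ^ M < pushforward_cyl \<delta> r p n u"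
      by linarith
    with n show "\<exists>k1\<in>{1..M * Suc (length w)}. \<exists>k2\<in>{1..M * Suc (length w)}.
        framed_preimage \<delta> r u w k1 k2 n"
      by (intro framed_preimage_if_heavy[OF cb]) simp_all
  qed
  then show ?thesis ..
qed

lemma frequently_pigeonhole_strict_mono:
  assumes "finite K" and "\<exists>\<^sub>F n in sequentially. \<exists>k\<in>K. P k n"
  shows "\<exists>k\<in>K. \<exists>s::nat \<Rightarrow> nat. strict_mono s \<and> (\<forall>j. P k (s j))"
proof -
  define A where "A = {n. \<exists>k\<in>K. P k n}"
  have "infinite A"
    using assms(2) unfolding A_def cofinite_eq_sequentially[symmetric] frequently_cofinite .
  then obtain k where k: "k \<in> K" and "infinite {n \<in> A. P k n}"
    using pigeonhole_infinite_rel[of A K "\<lambda>n k. P k n"] assms(1) unfolding A_def by blast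
  then obtain s :: "nat \<Rightarrow> nat" where "strict_mono s" and "\<forall>j. s j \<in> {n \<in> A. P k n}"
    using infinite_enumerate by blast
  with k show ?thesis
    by blast
qed

theorem mainTheorem2:
  fixes \<delta> :: "'q::finite list \<Rightarrow> 'q" and r :: nat and p :: "'q \<Rightarrow> real"
    and w u :: "'q list"
  assumes "r \<ge> 1"
    and "complete_bernoulli p"
    and "persistent \<delta> r p u"
  shows "\<exists>(k1::nat) (k2::nat) (n::nat \<Rightarrow> nat). k1 > 0 \<and> k2 > 0 \<and> strict_mono n \<and> (\<forall>j. n j > 0) \<and>
    (\<forall>j. preimage_words \<delta> r (n j) u \<inter>
          pattern_set (int r * int (n j) - int k1 - int (length w)) w
                      (int k1 + int k2 + int (length u))
                      (int r * int (n j) - int k2 - int (length w)) \<noteq> {})"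
proof -
  obtain B where "\<exists>\<^sub>F n in sequentially. \<exists>k1\<in>{1..B}. \<exists>k2\<in>{1..B}. framed_preimage \<delta> r u w k1 k2 n"
    using persistent_frequently_framed_preimage[OF assms] by blast
  then have "\<exists>\<^sub>F n in sequentially. (\<exists>k1\<in>{1..B}. \<exists>k2\<in>{1..B}. framed_preimage \<delta> r u w k1 k2 n) \<and> 0 < n"
    by (rule frequently_eventually_frequently[OF _ eventually_gt_at_top])
  then have "\<exists>\<^sub>F n in sequentially. \<exists>k\<in>{1..B} \<times> {1..B}. 0 < n \<and> framed_preimage \<delta> r u w (fst k) (snd k) n"
    by (rule frequently_elim1) auto
  then have "\<exists>k\<in>{1..B} \<times> {1..B}. \<exists>s::nat \<Rightarrow> nat.
      strict_mono s \<and> (\<forall>j. 0 < s j \<and> framed_preimage \<delta> r u w (fst k) (snd k) (s j))"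
    by (intro frequently_pigeonhole_strict_mono) simp_all
  then obtain k and s :: "nat \<Rightarrow> nat" where "k \<in> {1..B} \<times> {1..B}" "strict_mono s"
    and "\<forall>j. 0 < s j \<and> framed_preimage \<delta> r u w (fst k) (snd k) (s j)"
    by blast
  then show ?thesis
    unfolding framed_preimage_def by (intro exI[of _ "fst k"] exI[of _ "snd k"] exI[of _ s]) auto
qed

end
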